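(* Let $u$ be a nondecreasing packed word and let $v,v'$ be packed words with $\mathrm{WC}(v')=\mathrm{WC}(v)$. Then $\zeta(\mathbf M_u\star_q\mathbf M_v)=\zeta(\mathbf M_u\star_q\mathbf M_{v'})$.
   Context: Over $\mathbb K(q)$ ($\mathrm{char}\,\mathbb K=0$): packed words are words with letter set $\{1,\dots,m\}$; $\mathrm{pack}$ replaces the $t$-th smallest letter by $t$. For a packed word $w$ of length $N$: $\mathrm{WC}(w)$ is the composition of $N$ whose descent set (set of partial sums other than $N$) is the set of positions $p<N$ with $w_p$ not occurring in $w_{p+1}\cdots w_N$; $\mathrm{sinv}(w)=\#\{i<j:w_i>w_j,\ w_j\text{ not occurring in }w_{j+1}\cdots w_N\}$. $\mathbf{WQSym}$ has basis $\mathbf M_u$ with $\mathbf M_{u'}\mathbf M_{u''}=\sum\mathbf M_z$ over packed $z=x\cdot y$ with $\mathrm{pack}(x)=u'$, $\mathrm{pack}(y)=u''$; $\mathbf M_{u'}\star_q\mathbf M_{u''}=\sum q^{\mathrm{sinv}(z)-\mathrm{sinv}(u')-\mathrm{sinv}(u'')}\mathbf M_z$ over the same $z$. $\zeta$ is the quotient map from $\mathbf{WQSym}$ to its quotient by the span of all $\mathbf M_z-\mathbf M_{z'}$ with $\mathrm{WC}(z)=\mathrm{WC}(z')$. *)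

theory Defs
  imports "HOL-Computational_Algebra.Polynomial" "HOL-Computational_Algebra.Fraction_Field"
begin

(* Words are lists of natural numbers; positions are 0-indexed in the code. *)

definition packed :: "nat list \<Rightarrow> bool" where
  "packed w \<longleftrightarrow> set w = {1..card (set w)}"

definition pack :: "nat list \<Rightarrow> nat list" where
  "pack w = map (\<lambda>a. card {b \<in> set w. b \<le> a}) w"

(* descent set of WC(w), with 1-indexed positions p < N *)
definition wc_des :: "nat list \<Rightarrow> nat set" where
  "wc_des w = {p. 1 \<le> p \<and> p < length w \<and> w ! (p - 1) \<notin> set (drop p w)}"

(* the composition of N with prescribed descent set D \<subseteq> {1..N-1} *)
definition comp_of_set :: "nat \<Rightarrow> nat set \<Rightarrow> nat list" where
  "comp_of_set N D =
     (if N = 0 then []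
      else (let ps = sorted_list_of_set D @ [N] in map2 (-) ps (0 # butlast ps)))"

definition WC :: "nat list \<Rightarrow> nat list" where
  "WC w = comp_of_set (length w) (wc_des w)"

definition sinv :: "nat list \<Rightarrow> nat" where
  "sinv w = card {(i, j). i < j \<and> j < length w \<and> w ! i > w ! j \<and>
                           w ! j \<notin> set (drop (j + 1) w)}"

type_synonym 'k ratfun = "'k poly fract"

definition qvar :: "'k::field_char_0 ratfun" where
  "qvar = Fract [:0, 1:] 1"

(* elements of WQSym: finitely supported coefficient functions on packed words *)
type_synonym 'k wqsym = "nat list \<Rightarrow> 'k ratfun"

definition Mb :: "nat list \<Rightarrow> 'k::field_char_0 wqsym" where
  "Mb u = (\<lambda>z. if z = u then 1 else 0)"

definition shuffle_set :: "nat list \<Rightarrow> nat list \<Rightarrow> nat list set" where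
  "shuffle_set u' u'' = {z. packed z \<and> length z = length u' + length u'' \<and>
      pack (take (length u') z) = u' \<and> pack (drop (length u') z) = u''}"

definition star_q :: "nat list \<Rightarrow> nat list \<Rightarrow> 'k::field_char_0 wqsym" where
  "star_q u' u'' = (\<lambda>z. if z \<in> shuffle_set u' u''
      then qvar powi (int (sinv z) - int (sinv u') - int (sinv u'')) else 0)"

(* zeta: the quotient by span{M_z - M_z' : WC z = WC z'} is identified with the
   free module on compositions; zeta f sends a composition c to the sum of the
   coefficients of f on packed words z with WC z = c *)
definition zeta :: "'k::field_char_0 wqsym \<Rightarrow> (nat list \<Rightarrow> 'k ratfun)" where
  "zeta f = (\<lambda>c. \<Sum>z\<in>{z. packed z \<and> WC z = c}. f z)"

end

theory Submission
  imports Defs "HOL-Library.Infinite_Set"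
begin

text \<open>
  Write a word \<open>z\<close> of the shuffle set of \<open>u\<close> and \<open>v\<close> as \<open>x @ y\<close> with \<open>pack x = u\<close>
  and \<open>pack y = v\<close>. Since \<open>u\<close> is nondecreasing, so is \<open>x\<close>; hence no inversion counted by
  \<open>sinv\<close> has both positions in \<open>x\<close>, and \<open>sinv (x @ y)\<close> is \<open>sinv y\<close> plus a quantity
  depending only on \<open>x\<close> and the set of letters of \<open>y\<close>. Likewise \<open>WC z\<close> is determined by
  the length of \<open>z\<close> and the positions of last occurrences of letters, and these depend only on
  \<open>x\<close>, the letters of \<open>y\<close> and the last-occurrence positions of \<open>y\<close>. Now \<open>WC v' = WC v\<close>
  says that \<open>v\<close> and \<open>v'\<close> have the same length and the same last-occurrence positions, so
  replacing \<open>y\<close> by the word with the same letters and pattern \<open>v'\<close> is a bijection between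
  the two shuffle sets that preserves \<open>WC\<close> and shifts \<open>sinv\<close> by exactly
  \<open>sinv v' - sinv v\<close>, the shift absorbed by the normalisation of the power of \<open>q\<close>.
\<close>

section \<open>Positions of last occurrences\<close>

lemma in_set_drop_iff:
  "a \<in> set (drop k w) \<longleftrightarrow> (\<exists>i. k \<le> i \<and> i < length w \<and> w ! i = a)"
proof
  assume "a \<in> set (drop k w)"
  then obtain i where "i < length w - k" "drop k w ! i = a" by (auto simp: in_set_conv_nth)
  then show "\<exists>i. k \<le> i \<and> i < length w \<and> w ! i = a" by (intro exI[of _ "k + i"]) auto
next
  assume "\<exists>i. k \<le> i \<and> i < length w \<and> w ! i = a"
  then obtain i where "k \<le> i" "i < length w" "w ! i = a" by blast
  then show "a \<in> set (drop k w)" unfolding in_set_conv_nth by (intro exI[of _ "i - k"]) auto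
qed

definition last_positions :: "nat list \<Rightarrow> nat set" where
  "last_positions w = {j. j < length w \<and> w ! j \<notin> set (drop (Suc j) w)}"

lemma bij_betw_nth_last_positions: "bij_betw ((!) w) (last_positions w) (set w)"
proof -
  have "inj_on ((!) w) (last_positions w)"
  proof (rule inj_onI)
    fix i j assume "i \<in> last_positions w" "j \<in> last_positions w" "w ! i = w ! j"
    then show "i = j"
      unfolding last_positions_def in_set_drop_iff
      by (cases i j rule: linorder_cases) (auto simp: Suc_le_eq)
  qed
  moreover have "a \<in> (!) w ` last_positions w" if "a \<in> set w" for a
  proof -
    define J where "J = {j. j < length w \<and> w ! j = a}"
    have "finite J" "J \<noteq> {}"
      using that by (auto simp: J_def in_set_conv_nth)
    then have "Max J \<in> J"
      by (rule Max_in)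
    moreover have "a \<notin> set (drop (Suc (Max J)) w)"
    proof
      assume "a \<in> set (drop (Suc (Max J)) w)"
      then obtain i where "Max J < i" "i \<in> J"
        by (auto simp: in_set_drop_iff J_def Suc_le_eq)
      with \<open>finite J\<close> show False
        using Max_ge not_le by blast
    qed
    ultimately show ?thesis
      by (auto simp: last_positions_def J_def image_iff)
  qed
  ultimately show ?thesis
    by (auto simp: bij_betw_def last_positions_def)
qed

lemma card_last_positions: "card (last_positions w) = card (set w)"
  using bij_betw_same_card[OF bij_betw_nth_last_positions] .

lemma last_positions_map:
  assumes "inj_on f (set w)"
  shows "last_positions (map f w) = last_positions w"
proof -
  have "f (w ! j) \<in> set (drop (Suc j) (map f w)) \<longleftrightarrow> w ! j \<in> set (drop (Suc j) w)"
    if "j < length w" for j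
    using assms that set_drop_subset[of "Suc j" w] by (simp add: drop_map inj_on_image_mem_iff)
  then show ?thesis by (auto simp: last_positions_def)
qed

lemma last_positions_append:
  "last_positions (x @ y) =
     {j \<in> last_positions x. x ! j \<notin> set y} \<union> (\<lambda>j. j + length x) ` last_positions y"
proof (intro set_eqI iffI)
  fix j assume "j \<in> last_positions (x @ y)"
  then show "j \<in> {j \<in> last_positions x. x ! j \<notin> set y} \<union> (\<lambda>j. j + length x) ` last_positions y"
    by (cases "j < length x")
       (auto simp: last_positions_def nth_append image_iff Suc_diff_le intro!: exI[of _ "j - length x"])
qed (auto simp: last_positions_def nth_append)

section \<open>The composition \<open>WC\<close>\<close>

lemma wc_des_last_positions: "wc_des w = Suc ` last_positions w - {length w}"
proof -
  have "p \<in> wc_des w \<longleftrightarrow> (\<exists>j. p = Suc j \<and> j \<in> last_positions w \<and> p \<noteq> length w)" for p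
    by (cases p) (auto simp: wc_des_def last_positions_def)
  then show ?thesis by blast
qed

lemma last_positions_wc_des:
  "last_positions w = {j. j < length w \<and> (Suc j = length w \<or> Suc j \<in> wc_des w)}"
  by (auto simp: wc_des_last_positions last_positions_def)

definition consecutive_diffs :: "nat list \<Rightarrow> nat list" where
  "consecutive_diffs ps = map2 (-) ps (0 # butlast ps)"

lemma length_consecutive_diffs [simp]: "length (consecutive_diffs ps) = length ps"
  by (cases ps) (simp_all add: consecutive_diffs_def)

lemma sum_list_take_consecutive_diffs:
  assumes "sorted ps" "i < length ps"
  shows "sum_list (take (Suc i) (consecutive_diffs ps)) = ps ! i"
  using assms(2)
proof (induction i)
  case 0
  then show ?case by (cases ps) (simp_all add: consecutive_diffs_def)
next
  case (Suc i)
  have "consecutive_diffs ps ! Suc i = ps ! Suc i - ps ! i"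
    using Suc.prems by (simp add: consecutive_diffs_def nth_butlast)
  moreover have "ps ! i \<le> ps ! Suc i"
    using assms(1) Suc.prems by (simp add: sorted_iff_nth_mono)
  ultimately show ?case
    using Suc by (simp add: take_Suc_conv_app_nth)
qed

lemma inj_on_consecutive_diffs: "inj_on consecutive_diffs (Collect sorted)"
proof (rule inj_onI)
  fix ps qs assume "ps \<in> Collect sorted" "qs \<in> Collect sorted" and eq: "consecutive_diffs ps = consecutive_diffs qs"
  then have "length ps = length qs"
    by (metis length_consecutive_diffs)
  then show "ps = qs"
    using sum_list_take_consecutive_diffs eq \<open>ps \<in> Collect sorted\<close> \<open>qs \<in> Collect sorted\<close>
    by (metis mem_Collect_eq nth_equalityI)
qed

lemma comp_of_set_eq_consecutive_diffs:
  "N \<noteq> 0 \<Longrightarrow> comp_of_set N D = consecutive_diffs (sorted_list_of_set D @ [N])"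
  by (simp add: comp_of_set_def consecutive_diffs_def)

lemma comp_of_set_inj:
  assumes "D \<subseteq> {1..<N}" "D' \<subseteq> {1..<N'}" "comp_of_set N D = comp_of_set N' D'"
  shows "N = N' \<and> D = D'"
proof -
  have fin: "finite D" "finite D'"
    using assms(1,2) finite_subset by blast+
  have sorted: "sorted (sorted_list_of_set D @ [N])" "sorted (sorted_list_of_set D' @ [N'])"
    using assms(1,2) fin by (auto simp: sorted_append)
  have lists_eq: "sorted_list_of_set D @ [N] = sorted_list_of_set D' @ [N']" if "N \<noteq> 0" "N' \<noteq> 0"
  proof (rule inj_onD[OF inj_on_consecutive_diffs])
    show "consecutive_diffs (sorted_list_of_set D @ [N]) = consecutive_diffs (sorted_list_of_set D' @ [N'])"
      using assms(3) that by (simp add: comp_of_set_eq_consecutive_diffs)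
  qed (use sorted in simp_all)
  have empty: "comp_of_set N D = [] \<longleftrightarrow> N = 0" for N D
  proof (cases "N = 0")
    case False
    then have "length (comp_of_set N D) \<noteq> 0"
      by (simp add: comp_of_set_eq_consecutive_diffs)
    with False show ?thesis by auto
  qed (simp add: comp_of_set_def)
  show ?thesis
  proof (cases "N = 0")
    case False
    then have "N' \<noteq> 0"
      using assms(3) empty[of N D] empty[of N' D'] by simp
    with False have "N = N'" "sorted_list_of_set D = sorted_list_of_set D'"
      using lists_eq by simp_all
    then show ?thesis
      using fin by (metis set_sorted_list_of_set)
  qed (use assms empty[of N D] empty[of N' D'] in auto)
qed

lemma WC_eq_iff:
  "WC w = WC w' \<longleftrightarrow> length w = length w' \<and> last_positions w = last_positions w'"
proof
  assume "WC w = WC w'"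
  moreover have "wc_des w \<subseteq> {1..<length w}" "wc_des w' \<subseteq> {1..<length w'}"
    by (auto simp: wc_des_def)
  ultimately have "length w = length w' \<and> wc_des w = wc_des w'"
    unfolding WC_def by (blast dest: comp_of_set_inj)
  then show "length w = length w' \<and> last_positions w = last_positions w'"
    by (simp add: last_positions_wc_des)
qed (simp add: WC_def wc_des_last_positions)

section \<open>The statistic \<open>sinv\<close>\<close>

definition sinv_pairs :: "nat list \<Rightarrow> (nat \<times> nat) set" where
  "sinv_pairs w = {(i, j). i < j \<and> j \<in> last_positions w \<and> w ! j < w ! i}"

lemma sinv_eq_card: "sinv w = card (sinv_pairs w)"
  unfolding sinv_def sinv_pairs_def last_positions_def by (rule arg_cong[where f = card]) auto

lemma sinv_map:
  assumes "strict_mono_on (set w) f"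
  shows "sinv (map f w) = sinv w"
proof -
  have "sinv_pairs (map f w) = sinv_pairs w"
    using last_positions_map[OF strict_mono_on_imp_inj_on[OF assms]]
      strict_mono_on_less[OF assms]
    by (auto simp: sinv_pairs_def last_positions_def)
  then show ?thesis by (simp add: sinv_eq_card)
qed

lemma sinv_pairs_append:
  assumes "sorted x"
  shows "sinv_pairs (x @ y) =
    (\<lambda>(j, i). (i, j + length x)) ` (SIGMA j:last_positions y. {i. i < length x \<and> y ! j < x ! i})
    \<union> map_prod (\<lambda>i. i + length x) (\<lambda>j. j + length x) ` sinv_pairs y"
    (is "_ = ?cross \<union> ?inner")
proof (intro set_eqI iffI)
  fix p assume "p \<in> sinv_pairs (x @ y)"
  then obtain i j where p: "p = (i, j)" "i < j" "j \<in> last_positions (x @ y)"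
    and less: "(x @ y) ! j < (x @ y) ! i"
    by (auto simp: sinv_pairs_def)
  have "j \<notin> last_positions x"
  proof
    assume "j \<in> last_positions x"
    then have "x ! i \<le> x ! j"
      using assms \<open>i < j\<close> by (simp add: last_positions_def sorted_iff_nth_mono)
    with less \<open>i < j\<close> \<open>j \<in> last_positions x\<close> show False
      by (auto simp: last_positions_def nth_append)
  qed
  then obtain k where k: "j = k + length x" "k \<in> last_positions y"
    using p(3) by (auto simp: last_positions_append)
  show "p \<in> ?cross \<union> ?inner"
  proof (cases "i < length x")
    case True
    then have "(k, i) \<in> (SIGMA j:last_positions y. {i. i < length x \<and> y ! j < x ! i})"
      using k less by (simp add: nth_append)
    then show ?thesis using p k by force
  next
    case False
    then have "(i - length x, k) \<in> sinv_pairs y"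
      using k less p by (auto simp: sinv_pairs_def nth_append)
    then show ?thesis using p k False by force
  qed
qed (auto simp: sinv_pairs_def last_positions_append nth_append)

lemma sinv_append:
  assumes "sorted x"
  shows "sinv (x @ y) = sinv y + (\<Sum>b\<in>set y. card {i. i < length x \<and> b < x ! i})"
proof -
  let ?C = "SIGMA j:last_positions y. {i. i < length x \<and> y ! j < x ! i}"
  have fin: "finite ?C" "finite (sinv_pairs y)"
    by (auto simp: last_positions_def sinv_pairs_def intro: finite_subset[of _ "{..<length y} \<times> {..<length y}"])
  have "card ?C = (\<Sum>j\<in>last_positions y. card {i. i < length x \<and> y ! j < x ! i})"
    by (rule card_SigmaI) (auto simp: last_positions_def)
  also have "\<dots> = (\<Sum>b\<in>set y. card {i. i < length x \<and> b < x ! i})"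
    by (rule sum.reindex_bij_betw[OF bij_betw_nth_last_positions])
  moreover have "card (sinv_pairs (x @ y)) = card ?C + card (sinv_pairs y)"
    unfolding sinv_pairs_append[OF assms] using fin
    by (subst card_Un_disjoint) (auto simp: card_image inj_on_def sinv_pairs_def)
  ultimately show ?thesis
    by (simp add: sinv_eq_card)
qed

section \<open>Packing and unpacking\<close>

lemma strict_mono_on_card_le:
  fixes S :: "'a::linorder set"
  assumes "finite S"
  shows "strict_mono_on S (\<lambda>a. card {b \<in> S. b \<le> a})"
proof (rule strict_mono_onI)
  fix a a' assume "a \<in> S" "a' \<in> S" "a < a'"
  then have "{b \<in> S. b \<le> a} \<subseteq> {b \<in> S. b \<le> a'}" "a' \<in> {b \<in> S. b \<le> a'} - {b \<in> S. b \<le> a}"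
    by auto
  then have "{b \<in> S. b \<le> a} \<subset> {b \<in> S. b \<le> a'}"
    by blast
  then show "card {b \<in> S. b \<le> a} < card {b \<in> S. b \<le> a'}"
    using assms by (auto intro: psubset_card_mono)
qed

lemma length_pack [simp]: "length (pack w) = length w"
  by (simp add: pack_def)

lemma pack_map:
  assumes "strict_mono_on (set w) f"
  shows "pack (map f w) = pack w"
proof -
  have "card {b \<in> f ` set w. b \<le> f a} = card {b \<in> set w. b \<le> a}" if "a \<in> set w" for a
  proof -
    have "{b \<in> f ` set w. b \<le> f a} = f ` {b \<in> set w. b \<le> a}"
      using assms that by (auto simp: strict_mono_on_less_eq)
    moreover have "inj_on f {b \<in> set w. b \<le> a}"
      using strict_mono_on_imp_inj_on[OF assms] by (rule inj_on_subset) auto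
    ultimately show ?thesis by (simp add: card_image)
  qed
  then show ?thesis by (simp add: pack_def)
qed

lemma pack_packed: "packed v \<Longrightarrow> pack v = v"
proof -
  assume "packed v"
  then obtain L where L: "set v = {1..L}"
    by (auto simp: packed_def)
  have "card {b \<in> set v. b \<le> a} = a" if "a \<in> set v" for a
  proof -
    have "{b \<in> set v. b \<le> a} = {1..a}"
      using that unfolding L by auto
    then show ?thesis by simp
  qed
  then show ?thesis by (simp add: pack_def map_idI)
qed

lemma sorted_pack_iff: "sorted (pack w) \<longleftrightarrow> sorted w"
proof -
  have "sorted_wrt (\<lambda>a b. card {c \<in> set w. c \<le> a} \<le> card {c \<in> set w. c \<le> b}) w
      \<longleftrightarrow> sorted_wrt (\<le>) w"
    using strict_mono_on_less_eq[OF strict_mono_on_card_le[OF finite_set], of _ w]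
    by (auto elim!: sorted_wrt_mono_rel[rotated])
  then show ?thesis
    by (simp add: pack_def sorted_map)
qed

lemma last_positions_pack: "last_positions (pack w) = last_positions w"
  unfolding pack_def
  by (rule last_positions_map[OF strict_mono_on_imp_inj_on[OF strict_mono_on_card_le[OF finite_set]]])

lemma sinv_pack: "sinv (pack w) = sinv w"
  unfolding pack_def by (rule sinv_map[OF strict_mono_on_card_le[OF finite_set]])

text \<open>Letters of packed words start at \<open>1\<close>, whereas \<open>enumerate\<close> starts counting at \<open>0\<close>.\<close>

definition unpack :: "nat list \<Rightarrow> nat \<Rightarrow> nat" where
  "unpack y k = enumerate (set y) (k - 1)"

lemma card_le_enumerate:
  fixes S :: "'a::wellorder set"
  assumes "finite S" "n < card S"
  shows "card {b \<in> S. b \<le> enumerate S n} = Suc n"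
proof -
  have bij: "bij_betw (enumerate S) {..<card S} S"
    using assms(1) by (rule finite_bij_enumerate)
  have "{b \<in> S. b \<le> enumerate S n} = enumerate S ` {..n}"
  proof (intro set_eqI iffI)
    fix b assume "b \<in> {b \<in> S. b \<le> enumerate S n}"
    moreover from this obtain m where "m < card S" "b = enumerate S m"
      using bij by (auto simp: bij_betw_def)
    ultimately show "b \<in> enumerate S ` {..n}"
      using assms by (auto simp: not_less[symmetric] finite_enumerate_mono_iff)
  next
    fix b assume "b \<in> enumerate S ` {..n}"
    then show "b \<in> {b \<in> S. b \<le> enumerate S n}"
      using assms by (auto simp: le_less finite_enumerate_in_set)
  qed
  moreover have "inj_on (enumerate S) {..n}"
    using bij assms(2) by (auto simp: bij_betw_def intro: inj_on_subset)
  ultimately show ?thesis by (simp add: card_image)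
qed

lemma strict_mono_on_unpack: "strict_mono_on {1..card (set y)} (unpack y)"
  by (rule strict_mono_onI) (auto simp: unpack_def)

lemma unpack_image: "unpack y ` {1..card (set y)} = set y"
proof -
  have "unpack y ` {1..card (set y)} = enumerate (set y) ` {..<card (set y)}"
    unfolding unpack_def by (force simp: image_iff intro: bexI[of _ "Suc _"])
  then show ?thesis
    using finite_bij_enumerate[of "set y"] by (simp add: bij_betw_def)
qed

lemma map_unpack_pack: "map (unpack y) (pack y) = y"
proof (rule nth_equalityI)
  fix i assume "i < length (map (unpack y) (pack y))"
  then have "i < length y" by (simp add: pack_def)
  then obtain n where "n < card (set y)" "enumerate (set y) n = y ! i"
    using finite_enumerate_Ex[of "set y" "y ! i"] by auto
  moreover have "card {b \<in> set y. b \<le> y ! i} = Suc n"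
    using card_le_enumerate[of "set y" n] calculation by simp
  ultimately show "map (unpack y) (pack y) ! i = y ! i"
    using \<open>i < length y\<close> by (simp add: pack_def unpack_def)
qed (simp add: pack_def)

lemma set_pack: "set (pack y) = {1..card (set y)}"
proof -
  have "set (pack y) = (\<lambda>a. card {b \<in> set y. b \<le> a}) ` unpack y ` {1..card (set y)}"
    unfolding unpack_image by (simp add: pack_def)
  also have "\<dots> = (\<lambda>k. k) ` {1..card (set y)}"
    unfolding image_image
  proof (rule image_cong)
    fix k assume "k \<in> {1..card (set y)}"
    then show "card {b \<in> set y. b \<le> unpack y k} = k"
      using card_le_enumerate[of "set y" "k - 1"] by (auto simp: unpack_def)
  qed simp
  finally show ?thesis by simp
qed

section \<open>Changing the pattern of a suffix\<close>

text \<open>\<open>x @ y\<close> becomes \<open>x @ y'\<close>, where \<open>y'\<close> has the letters of \<open>y\<close> arranged in the pattern \<open>v\<close>.\<close>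

definition repattern_suffix :: "nat \<Rightarrow> nat list \<Rightarrow> nat list \<Rightarrow> nat list" where
  "repattern_suffix n v z = take n z @ map (unpack (drop n z)) v"

lemma shuffle_set_repattern_suffix:
  assumes "sorted u" "WC v' = WC v" "packed v'" "z \<in> shuffle_set u v"
  shows "repattern_suffix (length u) v' z \<in> shuffle_set u v'"
    and "WC (repattern_suffix (length u) v' z) = WC z"
    and "sinv (repattern_suffix (length u) v' z) + sinv v = sinv z + sinv v'"
    and "repattern_suffix (length u) v (repattern_suffix (length u) v' z) = z"
proof -
  define x y where "x = take (length u) z" and "y = drop (length u) z"
  define y' where "y' = map (unpack y) v'"
  have z: "z = x @ y" "packed z" "pack x = u" "pack y = v" "length x = length u"
    using assms(4) by (auto simp: shuffle_set_def x_def y_def)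
  have v': "length v' = length v" "last_positions v' = last_positions v"
    using assms(2) by (simp_all add: WC_eq_iff)
  have "card (set v') = card (set y)"
    using card_last_positions[of v'] card_last_positions[of v] v'(2)
    by (simp add: z(4)[symmetric] set_pack)
  then have set_v': "set v' = {1..card (set y)}"
    using assms(3) by (simp add: packed_def)
  then have y': "set y' = set y" "pack y' = v'"
    using pack_map[OF strict_mono_on_unpack[of y, folded set_v']] pack_packed[OF assms(3)]
      unpack_image[of y]
    by (simp_all add: y'_def)
  have result: "repattern_suffix (length u) v' z = x @ y'"
    by (simp add: repattern_suffix_def x_def y_def y'_def)
  show "repattern_suffix (length u) v' z \<in> shuffle_set u v'"
  proof -
    have "set (x @ y') = set z"
      using y'(1) z(1) by simp
    then have "packed (x @ y')"
      using z(2) by (simp add: packed_def)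
    then show ?thesis
      using z(3,5) y'(2) unfolding result shuffle_set_def by (simp add: y'_def)
  qed
  show "WC (repattern_suffix (length u) v' z) = WC z"
  proof -
    have "length y' = length y"
      using v'(1) length_pack[of y] z(4) by (simp add: y'_def)
    then have "WC (x @ y') = WC (x @ y)"
      using v' y' z(4) unfolding WC_eq_iff
      by (simp add: last_positions_append flip: last_positions_pack[of y] last_positions_pack[of y'])
    then show ?thesis
      using result z(1) by simp
  qed
  show "sinv (repattern_suffix (length u) v' z) + sinv v = sinv z + sinv v'"
  proof -
    have "sorted x"
      using assms(1) z(3) sorted_pack_iff by blast
    then have "sinv (x @ y') + sinv v = sinv (x @ y) + sinv v'"
      using y' z(4) by (simp add: sinv_append flip: sinv_pack[of y] sinv_pack[of y'])
    then show ?thesis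
      using result z(1) by simp
  qed
  have "unpack y' = unpack y"
    using y'(1) by (simp add: unpack_def fun_eq_iff)
  then have "repattern_suffix (length u) v (x @ y') = x @ y"
    using z(4,5) map_unpack_pack[of y] by (simp add: repattern_suffix_def)
  then show "repattern_suffix (length u) v (repattern_suffix (length u) v' z) = z"
    using result z(1) by simp
qed

lemma bij_betw_repattern_suffix:
  assumes "sorted u" "packed v" "packed v'" "WC v' = WC v"
  shows "bij_betw (repattern_suffix (length u) v') (shuffle_set u v) (shuffle_set u v')"
  using shuffle_set_repattern_suffix[OF assms(1,4,3)] shuffle_set_repattern_suffix[OF assms(1) assms(4)[symmetric] assms(2)]
  by (intro bij_betw_byWitness[where f' = "repattern_suffix (length u) v"]) auto

lemma zeta_star_q_eq_by_bij:
  assumes bij: "bij_betw T (shuffle_set u v) (shuffle_set u v')"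
    and WC: "\<And>z. z \<in> shuffle_set u v \<Longrightarrow> WC (T z) = WC z"
    and sinv: "\<And>z. z \<in> shuffle_set u v \<Longrightarrow> sinv (T z) + sinv v = sinv z + sinv v'"
  shows "(zeta (star_q u v) :: nat list \<Rightarrow> 'k::field_char_0 ratfun) = zeta (star_q u v')"
proof
  fix c
  define P where "P = {z. packed z \<and> WC z = c}"
  define coeff :: "nat list \<Rightarrow> nat list \<Rightarrow> 'k ratfun"
    where "coeff w z = qvar powi (int (sinv z) - int (sinv u) - int (sinv w))" for w z
  show "zeta (star_q u v) c = (zeta (star_q u v') c :: 'k ratfun)"
  proof (cases "finite P")
    case True
    have zeta: "zeta (star_q u w) c = (\<Sum>z\<in>P \<inter> shuffle_set u w. coeff w z)" for w
      using sum.inter_restrict[OF True, of "coeff w" "shuffle_set u w"]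
      unfolding coeff_def by (simp add: zeta_def star_q_def P_def)
    have packed: "z \<in> shuffle_set u w \<Longrightarrow> packed z" for w z
      by (simp add: shuffle_set_def)
    have "T ` (P \<inter> shuffle_set u v) = P \<inter> shuffle_set u v'"
    proof
      show "T ` (P \<inter> shuffle_set u v) \<subseteq> P \<inter> shuffle_set u v'"
        using bij_betw_apply[OF bij] WC packed by (auto simp: P_def)
      show "P \<inter> shuffle_set u v' \<subseteq> T ` (P \<inter> shuffle_set u v)"
      proof
        fix z' assume z': "z' \<in> P \<inter> shuffle_set u v'"
        then obtain z where "z \<in> shuffle_set u v" "z' = T z"
          using bij by (auto simp: bij_betw_def)
        then show "z' \<in> T ` (P \<inter> shuffle_set u v)"
          using z' WC packed by (auto simp: P_def)
      qed
    qed
    then have "bij_betw T (P \<inter> shuffle_set u v) (P \<inter> shuffle_set u v')"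
      by (rule bij_betw_subset[OF bij, rotated]) simp
    moreover have "coeff v' (T z) = coeff v z" if "z \<in> shuffle_set u v" for z
    proof -
      have "int (sinv (T z)) - int (sinv u) - int (sinv v') = int (sinv z) - int (sinv u) - int (sinv v)"
        using sinv[OF that] by linarith
      then show ?thesis unfolding coeff_def by (simp only:)
    qed
    ultimately show ?thesis
      unfolding zeta by (simp add: sum.reindex_bij_betw[symmetric])
  qed (simp add: zeta_def P_def) \<comment> \<open>an infinite \<open>P\<close> gives the junk sum \<open>0\<close> on both sides\<close>
qed

theorem mainTheorem18:
  fixes u v v' :: "nat list"
  assumes "packed u" and "sorted u"
    and "packed v" and "packed v'"
    and "WC v' = WC v"
  shows "(zeta (star_q u v) :: nat list \<Rightarrow> 'k::field_char_0 ratfun) = zeta (star_q u v')"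
  using shuffle_set_repattern_suffix[OF assms(2,5,4)]
  by (intro zeta_star_q_eq_by_bij[OF bij_betw_repattern_suffix[OF assms(2-5)]])

end
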